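(* Let $N\geq2$, $\gamma\geq0$, $\alpha\in(\frac{N}{2N-1},1)$ and $p>1$ with $2<p+1-\frac{2\gamma}{N-2\alpha}<\frac{2N}{N-2\alpha}$. Then the set $A_{a,b}$ is independent of $(a,b)\in(0,\infty)\times[0,\infty)$.
   Context: $H^\alpha_{rd}$ is the space of radial functions in the fractional Sobolev space $H^\alpha(\mathbb{R}^N)$ with norm $\|u\|_{H^\alpha}=(\|u\|_{L^2}^2+\|(-\Delta)^{\alpha/2}u\|_{L^2}^2)^{1/2}$. $S(\phi):=\frac12\|\phi\|_{H^\alpha}^2-\frac{1}{p+1}\int|x|^\gamma|\phi|^{p+1}dx$; for $\lambda>0$, $\phi^\lambda_{a,b}:=\lambda^a\phi(\cdot/\lambda^b)$; $K_{a,b}(\phi):=\partial_\lambda(S(\phi^\lambda_{a,b}))|_{\lambda=1}$; $m_{a,b}:=\inf\{S(\phi):0\neq\phi\in H^\alpha_{rd},\ K_{a,b}(\phi)=0\}$; $A_{a,b}:=\{\phi\in H^\alpha_{rd}:\ S(\phi)<m_{a,b},\ K_{a,b}(\phi)>0\}$. *)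

theory Defs
  imports "HOL-Analysis.Analysis"
begin

text \<open>Functions on R^N are modelled as complex-valued functions on real^'n, N = CARD('n).
  The fractional seminorm is given by the Gagliardo double integral with the
  normalising constant C(N,alpha), which equals the Fourier-side norm of
  (-Delta)^(alpha/2) u in L^2 (Di Nezza--Palatucci--Valdinoci, Prop. 3.4/3.6).\<close>

definition frac_const :: "real \<Rightarrow> ('n::finite itself) \<Rightarrow> real" where
  "frac_const \<alpha> TYPE('n) =
     inverse (integral\<^sup>L lborel
       (\<lambda>\<zeta>::real^'n. (1 - cos (\<zeta> \<bullet> (SOME e. e \<in> (Basis :: (real^'n) set))))
                       / norm \<zeta> powr (real CARD('n) + 2 * \<alpha>)))"

definition L2sq :: "(real^'n::finite \<Rightarrow> complex) \<Rightarrow> ennreal" where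
  "L2sq u = (\<integral>\<^sup>+ x. ennreal ((cmod (u x))\<^sup>2) \<partial>lborel)"

definition gagliardo :: "real \<Rightarrow> (real^'n::finite \<Rightarrow> complex) \<Rightarrow> ennreal" where
  "gagliardo \<alpha> u = (\<integral>\<^sup>+ x. \<integral>\<^sup>+ y.
      ennreal ((cmod (u x - u y))\<^sup>2 / dist x y powr (real CARD('n) + 2 * \<alpha>)) \<partial>lborel \<partial>lborel)"

definition frac_grad_sq :: "real \<Rightarrow> (real^'n::finite \<Rightarrow> complex) \<Rightarrow> real" where
  "frac_grad_sq \<alpha> u = frac_const \<alpha> TYPE('n) / 2 * enn2real (gagliardo \<alpha> u)"

definition Hs :: "real \<Rightarrow> (real^'n::finite \<Rightarrow> complex) set" where
  "Hs \<alpha> = {u. u \<in> borel_measurable lborel \<and> L2sq u < \<infinity> \<and> gagliardo \<alpha> u < \<infinity>}"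

definition radial :: "(real^'n::finite \<Rightarrow> complex) \<Rightarrow> bool" where
  "radial u \<longleftrightarrow> (\<exists>g::real \<Rightarrow> complex. AE x in lborel. u x = g (norm x))"

definition Hrd :: "real \<Rightarrow> (real^'n::finite \<Rightarrow> complex) set" where
  "Hrd \<alpha> = {u \<in> Hs \<alpha>. radial u}"

definition Hnorm_sq :: "real \<Rightarrow> (real^'n::finite \<Rightarrow> complex) \<Rightarrow> real" where
  "Hnorm_sq \<alpha> u = enn2real (L2sq u) + frac_grad_sq \<alpha> u"

definition action :: "real \<Rightarrow> real \<Rightarrow> real \<Rightarrow> (real^'n::finite \<Rightarrow> complex) \<Rightarrow> real" where
  "action \<alpha> \<gamma> p \<phi> = 1/2 * Hnorm_sq \<alpha> \<phi>
     - 1 / (p + 1) * integral\<^sup>L lborel (\<lambda>x. norm x powr \<gamma> * cmod (\<phi> x) powr (p + 1))"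

definition scaling :: "real \<Rightarrow> real \<Rightarrow> real \<Rightarrow> (real^'n::finite \<Rightarrow> complex) \<Rightarrow> (real^'n \<Rightarrow> complex)" where
  "scaling a b l \<phi> = (\<lambda>x. complex_of_real (l powr a) * \<phi> ((1 / l powr b) *\<^sub>R x))"

definition Kfun :: "real \<Rightarrow> real \<Rightarrow> real \<Rightarrow> real \<Rightarrow> real \<Rightarrow> (real^'n::finite \<Rightarrow> complex) \<Rightarrow> real" where
  "Kfun \<alpha> \<gamma> p a b \<phi> = deriv (\<lambda>l. action \<alpha> \<gamma> p (scaling a b l \<phi>)) 1"

definition mval :: "real \<Rightarrow> real \<Rightarrow> real \<Rightarrow> real \<Rightarrow> real \<Rightarrow> ('n::finite) itself \<Rightarrow> ereal" where
  "mval \<alpha> \<gamma> p a b TYPE('n) = Inf ((\<lambda>\<phi>. ereal (action \<alpha> \<gamma> p \<phi>)) `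
      {\<phi> :: real^'n \<Rightarrow> complex. \<phi> \<in> Hrd \<alpha> \<and> \<not> (AE x in lborel. \<phi> x = 0)
        \<and> Kfun \<alpha> \<gamma> p a b \<phi> = 0})"

definition Aset :: "real \<Rightarrow> real \<Rightarrow> real \<Rightarrow> real \<Rightarrow> real \<Rightarrow> (real^'n::finite \<Rightarrow> complex) set" where
  "Aset \<alpha> \<gamma> p a b = {\<phi> \<in> Hrd \<alpha>. ereal (action \<alpha> \<gamma> p \<phi>) < mval \<alpha> \<gamma> p a b TYPE('n)
        \<and> Kfun \<alpha> \<gamma> p a b \<phi> > 0}"

end

theory Submission
  imports Defs
begin

(*
  Along the curve l \<mapsto> \<phi>^l_{a,b} the three parts of S are homogeneous in l: the L^2 part
  with exponent 2a + Nb, the fractional part with 2a + (N - 2 \<alpha>)b and the weighted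
  L^{p+1} part with the strictly larger exponent e = (p+1)a + (N + \<gamma>)b. As a function of
  x = l^e, S(\<phi>^l_{a,b}) is therefore concave with slope K_{a,b}(\<phi>)/e at x = 1, so
  S(\<phi>^l_{a,b}) \<le> S(\<phi>) whenever (l - 1) K_{a,b}(\<phi>) \<le> 0.

  If \<psi> \<noteq> 0 and K_{a',b'}(\<psi>) = 0, then the weighted term of \<psi> is positive, so
  l \<mapsto> K_{a,b}(\<psi>^l_{a',b'}) is positive for small l and negative for large l. The
  intermediate value theorem gives a point of the (a',b')-curve through \<psi> with K_{a,b} = 0
  and action at most S(\<psi>); hence m_{a,b} \<le> m_{a',b'}, and equality holds by symmetry.
  The same argument shows that \<psi> \<in> A_{a,b} with K_{a',b'}(\<psi>) \<le> 0 would give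
  m_{a,b} \<le> S(\<psi>) < m_{a,b}.
*)

lemma powr_le_affine:
  fixes x r :: real
  assumes "x > 0" "0 \<le> r" "r \<le> 1"
  shows "x powr r \<le> 1 + r * (x - 1)"
  using Youngs_inequality_0[of r "1 - r" x 1] assms by (simp add: algebra_simps)

lemma powr_sum_concave_bound:
  fixes l t1 t2 e1 e2 e3 Q :: real
  assumes l: "l > 0" and t: "t1 \<ge> 0" "t2 \<ge> 0"
    and e: "0 \<le> e1" "e1 \<le> e3" "0 \<le> e2" "e2 \<le> e3" "0 < e3"
  shows "1/2 * (l powr e1 * t1 + l powr e2 * t2) - l powr e3 * Q
    \<le> 1/2 * (t1 + t2) - Q + (l powr e3 - 1) / e3 * (1/2 * (e1 * t1 + e2 * t2) - e3 * Q)"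
proof -
  define x where "x = l powr e3"
  have "l powr e \<le> 1 + e / e3 * (x - 1)" if "0 \<le> e" "e \<le> e3" for e
  proof -
    have "l powr e = x powr (e / e3)"
      unfolding x_def using l e by (simp add: powr_powr)
    then show ?thesis
      using powr_le_affine[of x "e / e3"] l that e by (simp add: x_def)
  qed
  then have "1/2 * (l powr e1 * t1 + l powr e2 * t2)
      \<le> 1/2 * ((1 + e1 / e3 * (x - 1)) * t1 + (1 + e2 / e3 * (x - 1)) * t2)"
    using t e by (intro mult_left_mono add_mono mult_right_mono) auto
  also have "\<dots> = 1/2 * (t1 + t2) - Q + (x - 1) / e3 * (1/2 * (e1 * t1 + e2 * t2) - e3 * Q) + x * Q"
    using e by (simp add: field_simps)
  finally show ?thesis
    unfolding x_def[symmetric] by linarith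
qed

lemma eventually_powr_sum_neg_at_top:
  fixes c1 c2 c3 t1 t2 Q e1 e2 e3 :: real
  assumes "Q > 0" "c3 > 0" "e1 < e3" "e2 < e3"
  shows "eventually (\<lambda>l. 1/2 * (c1 * l powr e1 * t1 + c2 * l powr e2 * t2) - c3 * l powr e3 * Q < 0) at_top"
proof -
  define g where "g l = 1/2 * (c1 * l powr (e1 - e3) * t1 + c2 * l powr (e2 - e3) * t2) - c3 * Q" for l
  have "(g \<longlongrightarrow> 1/2 * (c1 * 0 * t1 + c2 * 0 * t2) - c3 * Q) at_top"
    unfolding g_def using assms by (intro tendsto_intros tendsto_neg_powr filterlim_ident) auto
  then have "eventually (\<lambda>l. g l < 0) at_top"
    using assms by (intro order_tendstoD) auto
  moreover have "eventually (\<lambda>l. l > (0::real)) at_top"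
    by (rule eventually_gt_at_top)
  ultimately show ?thesis
  proof eventually_elim
    case (elim l)
    have "1/2 * (c1 * l powr e1 * t1 + c2 * l powr e2 * t2) - c3 * l powr e3 * Q = l powr e3 * g l"
      using elim by (simp add: g_def powr_diff field_simps)
    with elim show ?case by (simp add: mult_pos_neg)
  qed
qed

lemma eventually_powr_sum_pos_at_right_0:
  fixes c1 c2 c3 t1 t2 Q e1 e2 e3 :: real
  assumes "c1 * t1 > 0" "c2 * t2 \<ge> 0" "e1 < e3"
  shows "eventually (\<lambda>l. 1/2 * (c1 * l powr e1 * t1 + c2 * l powr e2 * t2) - c3 * l powr e3 * Q > 0) (at_right 0)"
proof -
  define g where "g l = 1/2 * c1 * t1 - c3 * Q * l powr (e3 - e1)" for l
  have "(g \<longlongrightarrow> 1/2 * c1 * t1 - c3 * Q * 0) (at_right 0)"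
    unfolding g_def using assms(3)
    by (intro tendsto_intros tendsto_zero_powrI) (auto simp: eventually_at_right_less eventually_at_filter)
  then have lim: "(g \<longlongrightarrow> 1/2 * c1 * t1) (at_right 0)"
    by simp
  have "eventually (\<lambda>l. g l > 0) (at_right 0)"
    using order_tendstoD(1)[OF lim, of 0] assms(1) by simp
  moreover have "eventually (\<lambda>l. l > (0::real)) (at_right 0)"
    by (simp add: eventually_at_right_less)
  ultimately show ?thesis
  proof eventually_elim
    case (elim l)
    have "1/2 * (c1 * l powr e1 * t1) - c3 * l powr e3 * Q = l powr e1 * g l"
      using elim by (simp add: g_def powr_diff field_simps)
    moreover have "l powr e1 * g l > 0"
      using elim by simp
    moreover have "c2 * l powr e2 * t2 \<ge> 0"
      using mult_nonneg_nonneg[OF assms(2), of "l powr e2"] by (simp add: ac_simps)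
    ultimately show ?case
      unfolding distrib_left by linarith
  qed
qed

lemma exists_zero_ge_one:
  fixes k :: "real \<Rightarrow> real"
  assumes "continuous_on {0<..} k" "k 1 \<ge> 0" "eventually (\<lambda>l. k l < 0) at_top"
  shows "\<exists>l\<ge>1. k l = 0"
proof -
  obtain L where L: "L \<ge> 1" "k L < 0"
    using assms(3) unfolding eventually_at_top_linorder by (metis max.cobounded1 max.cobounded2)
  have "continuous_on {1..L} k"
    using assms(1) by (rule continuous_on_subset) auto
  then show ?thesis
    using IVT2'[of k L 0 1] L assms(2) by auto
qed

lemma exists_zero_in_unit_interval:
  fixes k :: "real \<Rightarrow> real"
  assumes "continuous_on {0<..} k" "k 1 \<le> 0" "eventually (\<lambda>l. k l > 0) (at_right 0)"
  shows "\<exists>l\<in>{0<..1}. k l = 0"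
proof -
  obtain b where b: "b > 0" "\<And>l. 0 < l \<Longrightarrow> l < b \<Longrightarrow> k l > 0"
    using assms(3) by (auto simp: eventually_at_right_field)
  define l0 where "l0 = min (b/2) 1"
  have l0: "0 < l0" "l0 \<le> 1" "k l0 > 0"
    unfolding l0_def using b by auto
  have "continuous_on {l0..1} k"
    using assms(1) by (rule continuous_on_subset) (use l0 in auto)
  then obtain l where "l0 \<le> l" "l \<le> 1" "k l = 0"
    using IVT2'[of k 1 0 l0] l0 assms(2) by auto
  with l0 show ?thesis by auto
qed

lemma scaling_exponent_bounds:
  fixes N \<alpha> \<gamma> p a b :: real
  assumes "p > 1" "0 \<le> \<alpha>" "2*\<alpha> \<le> N" "0 \<le> \<gamma>" "0 < a" "0 \<le> b"
  shows "0 < 2*a + N*b" "0 < 2*a + (N - 2*\<alpha>)*b"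
    and "2*a + N*b < (p+1)*a + (N + \<gamma>)*b" "2*a + (N - 2*\<alpha>)*b < (p+1)*a + (N + \<gamma>)*b"
proof -
  have "0 \<le> N*b" "0 \<le> (N - 2*\<alpha>)*b" "0 \<le> (\<gamma> + 2*\<alpha>)*b" "0 \<le> \<gamma>*b" "0 < (p - 1)*a"
    using assms by auto
  then show "0 < 2*a + N*b" "0 < 2*a + (N - 2*\<alpha>)*b"
    and "2*a + N*b < (p+1)*a + (N + \<gamma>)*b" "2*a + (N - 2*\<alpha>)*b < (p+1)*a + (N + \<gamma>)*b"
    using assms(5) unfolding ring_distribs by linarith+
qed

section \<open>Dilations of Lebesgue measure\<close>

lemma nn_integral_lborel_dilate:
  fixes f :: "'a::euclidean_space \<Rightarrow> ennreal"
  assumes [measurable]: "f \<in> borel_measurable borel" and s: "s > 0"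
  shows "(\<integral>\<^sup>+x. f ((1/s) *\<^sub>R x) \<partial>lborel) = ennreal (s ^ DIM('a)) * (\<integral>\<^sup>+x. f x \<partial>lborel)"
proof -
  have "(\<integral>\<^sup>+x. f ((1/s) *\<^sub>R x) \<partial>lborel) =
      (\<integral>\<^sup>+x. f ((1/s) *\<^sub>R x) \<partial>density (distr lborel borel (\<lambda>x. 0 + s *\<^sub>R x)) (\<lambda>_. \<bar>s\<bar> ^ DIM('a)))"
    using s by (subst lborel_affine[of s 0]) auto
  also have "\<dots> = ennreal (s ^ DIM('a)) * (\<integral>\<^sup>+x. f x \<partial>lborel)"
    using s by (simp add: nn_integral_density nn_integral_distr nn_integral_cmult ennreal_power)
  finally show ?thesis .
qed

lemma integral_lborel_dilate:
  fixes f :: "'a::euclidean_space \<Rightarrow> real"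
  assumes [measurable]: "f \<in> borel_measurable borel" and s: "s > 0"
  shows "(\<integral>x. f ((1/s) *\<^sub>R x) \<partial>lborel) = s ^ DIM('a) * (\<integral>x. f x \<partial>lborel)"
proof -
  have "(\<integral>x. f ((1/s) *\<^sub>R x) \<partial>lborel) =
      (\<integral>x. f ((1/s) *\<^sub>R x) \<partial>density (distr lborel borel (\<lambda>x. 0 + s *\<^sub>R x)) (\<lambda>_. \<bar>s\<bar> ^ DIM('a)))"
    using s by (subst lborel_affine[of s 0]) auto
  also have "\<dots> = s ^ DIM('a) * (\<integral>x. f x \<partial>lborel)"
    using s by (subst integral_density) (auto simp: integral_distr)
  finally show ?thesis .
qed

lemma null_sets_lborel_dilate:
  fixes N :: "'a::euclidean_space set"
  assumes N: "N \<in> null_sets lborel" and s: "s > 0"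
  shows "(\<lambda>x. (1/s) *\<^sub>R x) -` N \<in> null_sets lborel"
proof -
  have [measurable]: "N \<in> sets borel"
    using N by (simp add: null_sets_def)
  have [measurable]: "(\<lambda>x. (1/s) *\<^sub>R x) -` N \<in> sets borel"
    using measurable_sets[of "\<lambda>x::'a. (1/s) *\<^sub>R x" borel borel N] by simp
  have "emeasure lborel ((\<lambda>x. (1/s) *\<^sub>R x) -` N) = (\<integral>\<^sup>+x. indicator N ((1/s) *\<^sub>R x) \<partial>lborel)"
    by (simp add: nn_integral_indicator[symmetric] indicator_def del: nn_integral_indicator)
  also have "\<dots> = ennreal (s ^ DIM('a)) * emeasure lborel N"
    using s by (simp add: nn_integral_lborel_dilate)
  also have "\<dots> = 0"
    using N by (simp add: null_setsD1)
  finally show ?thesis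
    by (simp add: null_sets_def)
qed

section \<open>Scaling laws of the functionals\<close>

definition mass :: "(real^'n::finite \<Rightarrow> complex) \<Rightarrow> real" where
  "mass \<phi> = enn2real (L2sq \<phi>)"

(* A Bochner integral, hence 0 when not integrable; the scaling law below holds either way. *)
definition potential :: "real \<Rightarrow> real \<Rightarrow> (real^'n::finite \<Rightarrow> complex) \<Rightarrow> real" where
  "potential \<gamma> p \<phi> = integral\<^sup>L lborel (\<lambda>x. norm x powr \<gamma> * cmod (\<phi> x) powr (p + 1))"

lemma action_eq: "action \<alpha> \<gamma> p \<phi> = 1/2 * (mass \<phi> + frac_grad_sq \<alpha> \<phi>) - potential \<gamma> p \<phi> / (p + 1)"
  unfolding action_def mass_def Hnorm_sq_def potential_def by simp

lemma mass_nonneg: "mass \<phi> \<ge> 0"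
  unfolding mass_def by simp

lemma frac_grad_sq_nonneg: "frac_grad_sq \<alpha> (\<phi> :: real^'n::finite \<Rightarrow> complex) \<ge> 0"
proof -
  have "frac_const \<alpha> TYPE('n) \<ge> 0"
    unfolding frac_const_def
    by (intro inverse_nonnegative_iff_nonnegative[THEN iffD2] integral_nonneg divide_nonneg_nonneg) auto
  then show ?thesis
    unfolding frac_grad_sq_def by simp
qed

lemma potential_nonneg: "potential \<gamma> p \<phi> \<ge> 0"
  unfolding potential_def by (intro integral_nonneg_AE) auto

lemma potential_eq_0_if_AE_zero: "AE x in lborel. \<phi> x = 0 \<Longrightarrow> potential \<gamma> p \<phi> = 0"
  unfolding potential_def by (rule integral_eq_zero_AE) (auto elim!: AE_mp)

lemma Hrd_measurable: "\<phi> \<in> Hrd \<alpha> \<Longrightarrow> \<phi> \<in> borel_measurable borel"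
  by (simp add: Hrd_def Hs_def)

lemma mass_pos:
  assumes "\<phi> \<in> Hrd \<alpha>" and nonzero: "\<not> (AE x in lborel. \<phi> x = 0)"
  shows "mass \<phi> > 0"
proof -
  have [measurable]: "\<phi> \<in> borel_measurable borel"
    using assms(1) by (rule Hrd_measurable)
  have "L2sq \<phi> \<noteq> 0"
  proof
    assume "L2sq \<phi> = 0"
    then have "AE x in lborel. ennreal ((cmod (\<phi> x))\<^sup>2) = 0"
      unfolding L2sq_def by (subst (asm) nn_integral_0_iff_AE) auto
    then have "AE x in lborel. \<phi> x = 0"
      by (auto elim!: AE_mp)
    with nonzero show False by simp
  qed
  moreover have "L2sq \<phi> < \<infinity>"
    using assms(1) by (simp add: Hrd_def Hs_def)
  ultimately show ?thesis
    unfolding mass_def by (simp add: enn2real_positive_iff top.not_eq_extremum zero_less_iff_neq_zero)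
qed

lemma scaling_1 [simp]: "scaling a b 1 \<phi> = \<phi>"
  unfolding scaling_def by simp

lemma scaling_measurable [measurable]:
  assumes [measurable]: "\<phi> \<in> borel_measurable borel"
  shows "scaling a b l \<phi> \<in> borel_measurable borel"
  unfolding scaling_def by measurable

lemma L2sq_scaling:
  fixes \<phi> :: "real^'n::finite \<Rightarrow> complex"
  assumes [measurable]: "\<phi> \<in> borel_measurable borel" and l: "l > 0"
  shows "L2sq (scaling a b l \<phi>) = ennreal (l powr (2*a + real CARD('n) * b)) * L2sq \<phi>"
proof -
  define s where "s = l powr b"
  have s: "s > 0" unfolding s_def using l by simp
  have [measurable]: "(\<lambda>x. ennreal ((cmod (\<phi> x))\<^sup>2)) \<in> borel_measurable borel"
    by measurable
  have "L2sq (scaling a b l \<phi>) = (\<integral>\<^sup>+x. ennreal ((l powr a)\<^sup>2) * ennreal ((cmod (\<phi> ((1/s) *\<^sub>R x)))\<^sup>2) \<partial>lborel)"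
    unfolding L2sq_def scaling_def s_def using l
    by (intro nn_integral_cong) (simp add: norm_mult power_mult_distrib ennreal_mult)
  also have "\<dots> = ennreal ((l powr a)\<^sup>2) * (ennreal (s ^ CARD('n)) * L2sq \<phi>)"
    unfolding L2sq_def using nn_integral_lborel_dilate[OF _ s, of "\<lambda>x. ennreal ((cmod (\<phi> x))\<^sup>2)"]
    by (simp add: nn_integral_cmult)
  also have "\<dots> = ennreal ((l powr a)\<^sup>2 * s ^ CARD('n)) * L2sq \<phi>"
    using s by (simp add: ennreal_mult mult.assoc)
  also have "(l powr a)\<^sup>2 * s ^ CARD('n) = l powr (2*a + real CARD('n) * b)"
    unfolding s_def using l by (simp add: powr_power powr_add)
  finally show ?thesis .
qed

lemma gagliardo_scaling:
  fixes \<phi> :: "real^'n::finite \<Rightarrow> complex"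
  assumes [measurable]: "\<phi> \<in> borel_measurable borel" and l: "l > 0"
  shows "gagliardo \<alpha> (scaling a b l \<phi>) = ennreal (l powr (2*a + (real CARD('n) - 2*\<alpha>) * b)) * gagliardo \<alpha> \<phi>"
proof -
  define s where "s = l powr b"
  have s: "s > 0" unfolding s_def using l by simp
  define e where "e = real CARD('n) + 2*\<alpha>"
  define c where "c = (l powr a)\<^sup>2 / s powr e"
  define F where "F = (\<lambda>u v :: real^'n. ennreal ((cmod (\<phi> u - \<phi> v))\<^sup>2 / dist u v powr e))"
  have [measurable]: "case_prod F \<in> borel_measurable (borel \<Otimes>\<^sub>M lborel)"
    unfolding F_def by measurable
  have [measurable]: "F u \<in> borel_measurable borel" for u
    unfolding F_def by measurable
  have [measurable]: "(\<lambda>u. \<integral>\<^sup>+ v. F u v \<partial>lborel) \<in> borel_measurable borel"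
    by measurable
  have pointwise: "ennreal ((cmod (scaling a b l \<phi> x - scaling a b l \<phi> y))\<^sup>2 / dist x y powr e)
      = ennreal c * F ((1/s) *\<^sub>R x) ((1/s) *\<^sub>R y)" for x y
  proof -
    have "dist x y = s * dist ((1/s) *\<^sub>R x) ((1/s) *\<^sub>R y)"
      using s by (simp add: dist_norm scaleR_diff_right[symmetric])
    moreover have "(cmod (scaling a b l \<phi> x - scaling a b l \<phi> y))\<^sup>2
        = (l powr a)\<^sup>2 * (cmod (\<phi> ((1/s) *\<^sub>R x) - \<phi> ((1/s) *\<^sub>R y)))\<^sup>2"
      unfolding scaling_def s_def by (simp add: right_diff_distrib[symmetric] norm_mult power_mult_distrib)
    ultimately show ?thesis
      unfolding F_def c_def using s by (simp add: powr_mult ennreal_mult[symmetric] divide_nonneg_nonneg)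
  qed
  have "gagliardo \<alpha> (scaling a b l \<phi>) = (\<integral>\<^sup>+ x. \<integral>\<^sup>+ y. ennreal c * F ((1/s) *\<^sub>R x) ((1/s) *\<^sub>R y) \<partial>lborel \<partial>lborel)"
    unfolding gagliardo_def e_def[symmetric] pointwise ..
  also have "\<dots> = (\<integral>\<^sup>+ x. ennreal c * (ennreal (s ^ CARD('n)) * (\<integral>\<^sup>+ y. F ((1/s) *\<^sub>R x) y \<partial>lborel)) \<partial>lborel)"
    using nn_integral_lborel_dilate[OF _ s, of "F _"] by (simp add: nn_integral_cmult)
  also have "\<dots> = ennreal c * (ennreal (s ^ CARD('n)) * (ennreal (s ^ CARD('n)) * gagliardo \<alpha> \<phi>))"
    using nn_integral_lborel_dilate[OF _ s, of "\<lambda>u. \<integral>\<^sup>+ v. F u v \<partial>lborel"]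
    by (simp add: nn_integral_cmult gagliardo_def F_def e_def)
  also have "\<dots> = ennreal (c * s ^ CARD('n) * s ^ CARD('n)) * gagliardo \<alpha> \<phi>"
  proof -
    have "c \<ge> 0"
      unfolding c_def by simp
    then show ?thesis
      using s by (simp add: ennreal_mult mult.assoc)
  qed
  also have "c * s ^ CARD('n) * s ^ CARD('n) = l powr (2*a + (real CARD('n) - 2*\<alpha>) * b)"
    unfolding c_def s_def e_def using l by (simp add: powr_power powr_powr powr_add powr_diff field_simps)
  finally show ?thesis .
qed

lemma potential_scaling:
  fixes \<phi> :: "real^'n::finite \<Rightarrow> complex"
  assumes [measurable]: "\<phi> \<in> borel_measurable borel" and l: "l > 0"
  shows "potential \<gamma> p (scaling a b l \<phi>) = l powr ((p+1)*a + (real CARD('n) + \<gamma>)*b) * potential \<gamma> p \<phi>"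
proof -
  define s where "s = l powr b"
  have s: "s > 0" unfolding s_def using l by simp
  define f where "f x = norm x powr \<gamma> * cmod (\<phi> x) powr (p + 1)" for x :: "real^'n"
  have [measurable]: "f \<in> borel_measurable borel"
    unfolding f_def by measurable
  have "norm x powr \<gamma> * cmod (scaling a b l \<phi> x) powr (p + 1) = l powr ((p+1)*a) * s powr \<gamma> * f ((1/s) *\<^sub>R x)" for x
  proof -
    have "cmod (scaling a b l \<phi> x) powr (p + 1) = l powr ((p+1)*a) * cmod (\<phi> ((1/s) *\<^sub>R x)) powr (p + 1)"
      unfolding scaling_def s_def using l by (simp add: norm_mult powr_mult powr_powr mult.commute)
    moreover have "norm x powr \<gamma> = s powr \<gamma> * norm ((1/s) *\<^sub>R x) powr \<gamma>"
      using s by (simp add: powr_divide)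
    ultimately show ?thesis
      unfolding f_def by simp
  qed
  then have "potential \<gamma> p (scaling a b l \<phi>) = l powr ((p+1)*a) * s powr \<gamma> * (\<integral>x. f ((1/s) *\<^sub>R x) \<partial>lborel)"
    unfolding potential_def by simp
  also have "\<dots> = l powr ((p+1)*a) * s powr \<gamma> * s ^ CARD('n) * potential \<gamma> p \<phi>"
    using integral_lborel_dilate[OF _ s, of f] by (simp add: potential_def f_def)
  also have "l powr ((p+1)*a) * s powr \<gamma> * s ^ CARD('n) = l powr ((p+1)*a + (real CARD('n) + \<gamma>)*b)"
    unfolding s_def using l by (simp add: powr_power powr_powr powr_add field_simps)
  finally show ?thesis .
qed

lemma mass_scaling:
  fixes \<phi> :: "real^'n::finite \<Rightarrow> complex"
  assumes "\<phi> \<in> borel_measurable borel" "l > 0"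
  shows "mass (scaling a b l \<phi>) = l powr (2*a + real CARD('n) * b) * mass \<phi>"
  unfolding mass_def using assms by (simp add: L2sq_scaling enn2real_mult)

lemma frac_grad_sq_scaling:
  fixes \<phi> :: "real^'n::finite \<Rightarrow> complex"
  assumes "\<phi> \<in> borel_measurable borel" "l > 0"
  shows "frac_grad_sq \<alpha> (scaling a b l \<phi>) = l powr (2*a + (real CARD('n) - 2*\<alpha>) * b) * frac_grad_sq \<alpha> \<phi>"
  unfolding frac_grad_sq_def using assms by (simp add: gagliardo_scaling enn2real_mult)

lemma Hrd_scaling:
  fixes \<phi> :: "real^'n::finite \<Rightarrow> complex"
  assumes \<phi>: "\<phi> \<in> Hrd \<alpha>" and l: "l > 0"
  shows "scaling a b l \<phi> \<in> Hrd \<alpha>"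
proof -
  have [measurable]: "\<phi> \<in> borel_measurable borel"
    using \<phi> by (rule Hrd_measurable)
  define s where "s = l powr b"
  have s: "s > 0" unfolding s_def using l by simp
  obtain g where "AE x in lborel. \<phi> x = g (norm x)"
    using \<phi> by (auto simp: Hrd_def radial_def)
  then obtain N where N: "{x. \<phi> x \<noteq> g (norm x)} \<subseteq> N" "N \<in> null_sets lborel"
    by (auto elim!: AE_E simp: null_sets_def)
  have "AE x in lborel. scaling a b l \<phi> x = complex_of_real (l powr a) * g (norm x / s)"
  proof (rule AE_I')
    show "(\<lambda>x. (1/s) *\<^sub>R x) -` N \<in> null_sets lborel"
      using N(2) s by (rule null_sets_lborel_dilate)
    show "{x \<in> space lborel. scaling a b l \<phi> x \<noteq> complex_of_real (l powr a) * g (norm x / s)}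
        \<subseteq> (\<lambda>x. (1/s) *\<^sub>R x) -` N"
    proof
      fix x
      assume "x \<in> {x \<in> space lborel. scaling a b l \<phi> x \<noteq> complex_of_real (l powr a) * g (norm x / s)}"
      then have "\<phi> ((1/s) *\<^sub>R x) \<noteq> g (norm ((1/s) *\<^sub>R x))"
        using s by (simp add: scaling_def s_def)
      then show "x \<in> (\<lambda>x. (1/s) *\<^sub>R x) -` N"
        using N(1) by auto
    qed
  qed
  then have "radial (scaling a b l \<phi>)"
    unfolding radial_def by (rule exI[of _ "\<lambda>r. complex_of_real (l powr a) * g (r / s)"])
  moreover have "L2sq (scaling a b l \<phi>) < \<infinity>" "gagliardo \<alpha> (scaling a b l \<phi>) < \<infinity>"
    using \<phi> l by (simp_all add: L2sq_scaling gagliardo_scaling Hrd_def Hs_def ennreal_mult_less_top)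
  ultimately show ?thesis
    by (simp add: Hrd_def Hs_def)
qed

lemma action_scaling:
  fixes \<phi> :: "real^'n::finite \<Rightarrow> complex"
  assumes "\<phi> \<in> borel_measurable borel" "l > 0"
  shows "action \<alpha> \<gamma> p (scaling a b l \<phi>) =
    1/2 * (l powr (2*a + real CARD('n) * b) * mass \<phi> + l powr (2*a + (real CARD('n) - 2*\<alpha>) * b) * frac_grad_sq \<alpha> \<phi>)
    - l powr ((p+1)*a + (real CARD('n) + \<gamma>)*b) * potential \<gamma> p \<phi> / (p + 1)"
  using assms by (simp add: action_eq mass_scaling frac_grad_sq_scaling potential_scaling)

lemma Kfun_eq:
  fixes \<phi> :: "real^'n::finite \<Rightarrow> complex"
  assumes "\<phi> \<in> borel_measurable borel" "p + 1 \<noteq> 0"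
  shows "Kfun \<alpha> \<gamma> p a b \<phi> =
    1/2 * ((2*a + real CARD('n) * b) * mass \<phi> + (2*a + (real CARD('n) - 2*\<alpha>) * b) * frac_grad_sq \<alpha> \<phi>)
    - ((p+1)*a + (real CARD('n) + \<gamma>)*b) / (p + 1) * potential \<gamma> p \<phi>"
proof -
  define e1 e2 e3 where "e1 = 2*a + real CARD('n) * b" and "e2 = 2*a + (real CARD('n) - 2*\<alpha>) * b"
    and "e3 = (p+1)*a + (real CARD('n) + \<gamma>)*b"
  define f where "f l = 1/2 * (l powr e1 * mass \<phi> + l powr e2 * frac_grad_sq \<alpha> \<phi>) - l powr e3 * potential \<gamma> p \<phi> / (p + 1)"
    for l :: real
  have "eventually (\<lambda>l. l \<in> {0<..}) (nhds (1::real))"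
    by (rule eventually_nhds_in_open) auto
  then have near_1: "eventually (\<lambda>l. action \<alpha> \<gamma> p (scaling a b l \<phi>) = f l) (nhds 1)"
    by eventually_elim (use assms in \<open>simp add: action_scaling f_def e1_def e2_def e3_def\<close>)
  have "(f has_real_derivative 1/2 * (e1 * mass \<phi> + e2 * frac_grad_sq \<alpha> \<phi>) - e3 * potential \<gamma> p \<phi> / (p + 1)) (at 1)"
    unfolding f_def using assms(2) by (auto intro!: derivative_eq_intros)
  then have "((\<lambda>l. action \<alpha> \<gamma> p (scaling a b l \<phi>)) has_real_derivative
      1/2 * (e1 * mass \<phi> + e2 * frac_grad_sq \<alpha> \<phi>) - e3 * potential \<gamma> p \<phi> / (p + 1)) (at 1)"
    using DERIV_cong_ev[OF refl near_1 refl] by simp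
  then show ?thesis
    unfolding Kfun_def e1_def e2_def e3_def by (simp add: DERIV_imp_deriv)
qed

lemma Kfun_scaling:
  fixes \<phi> :: "real^'n::finite \<Rightarrow> complex"
  assumes "\<phi> \<in> borel_measurable borel" "p + 1 \<noteq> 0" "l > 0"
  shows "Kfun \<alpha> \<gamma> p a b (scaling a' b' l \<phi>) =
    1/2 * ((2*a + real CARD('n) * b) * l powr (2*a' + real CARD('n) * b') * mass \<phi>
      + (2*a + (real CARD('n) - 2*\<alpha>) * b) * l powr (2*a' + (real CARD('n) - 2*\<alpha>) * b') * frac_grad_sq \<alpha> \<phi>)
    - ((p+1)*a + (real CARD('n) + \<gamma>)*b) / (p + 1) * l powr ((p+1)*a' + (real CARD('n) + \<gamma>)*b') * potential \<gamma> p \<phi>"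
  using assms by (simp add: Kfun_eq mass_scaling frac_grad_sq_scaling potential_scaling mult.assoc)

lemma continuous_on_Kfun_scaling:
  fixes \<phi> :: "real^'n::finite \<Rightarrow> complex"
  assumes "\<phi> \<in> borel_measurable borel" "p + 1 \<noteq> 0"
  shows "continuous_on {0<..} (\<lambda>l. Kfun \<alpha> \<gamma> p a b (scaling a' b' l \<phi>))"
proof (rule continuous_on_cong[THEN iffD2])
  show "Kfun \<alpha> \<gamma> p a b (scaling a' b' l \<phi>) =
    1/2 * ((2*a + real CARD('n) * b) * l powr (2*a' + real CARD('n) * b') * mass \<phi>
      + (2*a + (real CARD('n) - 2*\<alpha>) * b) * l powr (2*a' + (real CARD('n) - 2*\<alpha>) * b') * frac_grad_sq \<alpha> \<phi>)
    - ((p+1)*a + (real CARD('n) + \<gamma>)*b) / (p + 1) * l powr ((p+1)*a' + (real CARD('n) + \<gamma>)*b') * potential \<gamma> p \<phi>"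
    if "l \<in> {0<..}" for l
    using assms that by (simp add: Kfun_scaling)
qed (use assms in \<open>auto intro!: continuous_intros\<close>)

lemma eventually_Kfun_scaling_neg_at_top:
  fixes \<psi> :: "real^'n::finite \<Rightarrow> complex"
  assumes "\<psi> \<in> borel_measurable borel" "potential \<gamma> p \<psi> > 0"
    and "p > 1" "0 \<le> \<alpha>" "2*\<alpha> \<le> real CARD('n)" "0 \<le> \<gamma>" "0 < a" "0 \<le> b" "0 < a'" "0 \<le> b'"
  shows "eventually (\<lambda>l. Kfun \<alpha> \<gamma> p a b (scaling a' b' l \<psi>) < 0) at_top"
proof -
  note e = scaling_exponent_bounds[OF assms(3-8)] and e' = scaling_exponent_bounds[OF assms(3-6,9,10)]
  have "eventually (\<lambda>l. 1/2 * ((2*a + real CARD('n) * b) * l powr (2*a' + real CARD('n) * b') * mass \<psi>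
      + (2*a + (real CARD('n) - 2*\<alpha>) * b) * l powr (2*a' + (real CARD('n) - 2*\<alpha>) * b') * frac_grad_sq \<alpha> \<psi>)
    - ((p+1)*a + (real CARD('n) + \<gamma>)*b) / (p + 1) * l powr ((p+1)*a' + (real CARD('n) + \<gamma>)*b') * potential \<gamma> p \<psi> < 0) at_top"
    using assms e e' by (intro eventually_powr_sum_neg_at_top) auto
  moreover have "eventually (\<lambda>l. l > (0::real)) at_top"
    by (rule eventually_gt_at_top)
  ultimately show ?thesis
    by eventually_elim (use assms in \<open>simp add: Kfun_scaling\<close>)
qed

lemma eventually_Kfun_scaling_pos_at_right_0:
  fixes \<psi> :: "real^'n::finite \<Rightarrow> complex"
  assumes "\<psi> \<in> borel_measurable borel" "mass \<psi> > 0"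
    and "p > 1" "0 \<le> \<alpha>" "2*\<alpha> \<le> real CARD('n)" "0 \<le> \<gamma>" "0 < a" "0 \<le> b" "0 < a'" "0 \<le> b'"
  shows "eventually (\<lambda>l. Kfun \<alpha> \<gamma> p a b (scaling a' b' l \<psi>) > 0) (at_right 0)"
proof -
  note e = scaling_exponent_bounds[OF assms(3-8)] and e' = scaling_exponent_bounds[OF assms(3-6,9,10)]
  have "eventually (\<lambda>l. 1/2 * ((2*a + real CARD('n) * b) * l powr (2*a' + real CARD('n) * b') * mass \<psi>
      + (2*a + (real CARD('n) - 2*\<alpha>) * b) * l powr (2*a' + (real CARD('n) - 2*\<alpha>) * b') * frac_grad_sq \<alpha> \<psi>)
    - ((p+1)*a + (real CARD('n) + \<gamma>)*b) / (p + 1) * l powr ((p+1)*a' + (real CARD('n) + \<gamma>)*b') * potential \<gamma> p \<psi> > 0) (at_right 0)"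
    using assms e e' frac_grad_sq_nonneg[of \<alpha> \<psi>] by (intro eventually_powr_sum_pos_at_right_0) auto
  moreover have "eventually (\<lambda>l. l > (0::real)) (at_right 0)"
    by (simp add: eventually_at_right_less)
  ultimately show ?thesis
    by eventually_elim (use assms in \<open>simp add: Kfun_scaling\<close>)
qed

lemma action_scaling_le:
  fixes \<psi> :: "real^'n::finite \<Rightarrow> complex"
  assumes "\<psi> \<in> borel_measurable borel" "l > 0"
    and "p > 1" "0 \<le> \<alpha>" "2*\<alpha> \<le> real CARD('n)" "0 \<le> \<gamma>" "0 < a" "0 \<le> b"
  defines "e \<equiv> (p+1)*a + (real CARD('n) + \<gamma>)*b"
  shows "action \<alpha> \<gamma> p (scaling a b l \<psi>) \<le> action \<alpha> \<gamma> p \<psi> + (l powr e - 1) / e * Kfun \<alpha> \<gamma> p a b \<psi>"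
proof -
  note bounds = scaling_exponent_bounds[OF assms(3-8)]
  have "action \<alpha> \<gamma> p (scaling a b l \<psi>) =
    1/2 * (l powr (2*a + real CARD('n) * b) * mass \<psi> + l powr (2*a + (real CARD('n) - 2*\<alpha>) * b) * frac_grad_sq \<alpha> \<psi>)
    - l powr e * (potential \<gamma> p \<psi> / (p + 1))"
    using assms by (simp add: action_scaling)
  also have "\<dots> \<le> 1/2 * (mass \<psi> + frac_grad_sq \<alpha> \<psi>) - potential \<gamma> p \<psi> / (p + 1)
      + (l powr e - 1) / e * (1/2 * ((2*a + real CARD('n) * b) * mass \<psi>
        + (2*a + (real CARD('n) - 2*\<alpha>) * b) * frac_grad_sq \<alpha> \<psi>) - e * (potential \<gamma> p \<psi> / (p + 1)))"
    using bounds assms(2) unfolding e_def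
    by (intro powr_sum_concave_bound mass_nonneg frac_grad_sq_nonneg) auto
  also have "\<dots> = action \<alpha> \<gamma> p \<psi> + (l powr e - 1) / e * Kfun \<alpha> \<gamma> p a b \<psi>"
    using assms by (simp add: action_eq Kfun_eq e_def)
  finally show ?thesis .
qed

section \<open>Comparison of the levels\<close>

lemma mval_le_action:
  assumes "\<phi> \<in> Hrd \<alpha>" "potential \<gamma> p \<phi> > 0" "Kfun \<alpha> \<gamma> p a b \<phi> = 0"
  shows "mval \<alpha> \<gamma> p a b TYPE('n::finite) \<le> ereal (action \<alpha> \<gamma> p (\<phi> :: real^'n \<Rightarrow> complex))"
proof -
  have "\<not> (AE x in lborel. \<phi> x = 0)"
    using assms(2) potential_eq_0_if_AE_zero by force
  then show ?thesis
    unfolding mval_def using assms by (intro Inf_lower imageI) auto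
qed

lemma action_scaling_le_action:
  fixes \<psi> :: "real^'n::finite \<Rightarrow> complex"
  assumes "\<psi> \<in> borel_measurable borel" "l > 0" "(l - 1) * Kfun \<alpha> \<gamma> p a b \<psi> \<le> 0"
    and "p > 1" "0 \<le> \<alpha>" "2*\<alpha> \<le> real CARD('n)" "0 \<le> \<gamma>" "0 < a" "0 \<le> b"
  shows "action \<alpha> \<gamma> p (scaling a b l \<psi>) \<le> action \<alpha> \<gamma> p \<psi>"
proof -
  define e where "e = (p+1)*a + (real CARD('n) + \<gamma>)*b"
  have e: "e > 0"
    using scaling_exponent_bounds[OF assms(4-9)] unfolding e_def by linarith
  have "(l powr e - 1) * Kfun \<alpha> \<gamma> p a b \<psi> \<le> 0"
  proof (cases l "1::real" rule: linorder_cases)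
    case less
    then have "l powr e \<le> 1" "Kfun \<alpha> \<gamma> p a b \<psi> \<ge> 0"
      using assms(2,3) e by (auto simp: powr_le1 mult_le_0_iff)
    then show ?thesis
      by (simp add: mult_nonpos_nonneg)
  next
    case greater
    then have "l powr e \<ge> 1" "Kfun \<alpha> \<gamma> p a b \<psi> \<le> 0"
      using assms(3) e by (auto simp: ge_one_powr_ge_zero mult_le_0_iff)
    then show ?thesis
      by (simp add: mult_nonneg_nonpos)
  qed simp
  then have "(l powr e - 1) / e * Kfun \<alpha> \<gamma> p a b \<psi> \<le> 0"
    using e by (simp add: divide_nonpos_pos)
  then show ?thesis
    using action_scaling_le[OF assms(1,2,4-9)] unfolding e_def by linarith
qed

lemma exists_Kfun_scaling_zero_ge_one:
  fixes \<psi> :: "real^'n::finite \<Rightarrow> complex"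
  assumes "\<psi> \<in> borel_measurable borel" "potential \<gamma> p \<psi> > 0" "Kfun \<alpha> \<gamma> p a b \<psi> \<ge> 0"
    and "p > 1" "0 \<le> \<alpha>" "2*\<alpha> \<le> real CARD('n)" "0 \<le> \<gamma>" "0 < a" "0 \<le> b" "0 < a'" "0 \<le> b'"
  shows "\<exists>l\<ge>1. Kfun \<alpha> \<gamma> p a b (scaling a' b' l \<psi>) = 0"
  using continuous_on_Kfun_scaling[OF assms(1)] eventually_Kfun_scaling_neg_at_top[OF assms(1,2,4-11)] assms(3,4)
  by (intro exists_zero_ge_one) simp_all

lemma exists_Kfun_scaling_zero_in_unit_interval:
  fixes \<psi> :: "real^'n::finite \<Rightarrow> complex"
  assumes "\<psi> \<in> borel_measurable borel" "mass \<psi> > 0" "Kfun \<alpha> \<gamma> p a b \<psi> \<le> 0"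
    and "p > 1" "0 \<le> \<alpha>" "2*\<alpha> \<le> real CARD('n)" "0 \<le> \<gamma>" "0 < a" "0 \<le> b" "0 < a'" "0 \<le> b'"
  shows "\<exists>l\<in>{0<..1}. Kfun \<alpha> \<gamma> p a b (scaling a' b' l \<psi>) = 0"
  using continuous_on_Kfun_scaling[OF assms(1)] eventually_Kfun_scaling_pos_at_right_0[OF assms(1,2,4-11)] assms(3,4)
  by (intro exists_zero_in_unit_interval) simp_all

lemma mval_le_action_if_Kfun_scaling_zero:
  fixes \<psi> :: "real^'n::finite \<Rightarrow> complex"
  assumes \<psi>: "\<psi> \<in> Hrd \<alpha>" "potential \<gamma> p \<psi> > 0"
    and l: "l > 0" "Kfun \<alpha> \<gamma> p a b (scaling a' b' l \<psi>) = 0" "(l - 1) * Kfun \<alpha> \<gamma> p a' b' \<psi> \<le> 0"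
    and params: "p > 1" "0 \<le> \<alpha>" "2*\<alpha> \<le> real CARD('n)" "0 \<le> \<gamma>" "0 < a'" "0 \<le> b'"
  shows "mval \<alpha> \<gamma> p a b TYPE('n) \<le> ereal (action \<alpha> \<gamma> p \<psi>)"
proof -
  have meas: "\<psi> \<in> borel_measurable borel"
    using \<psi>(1) by (rule Hrd_measurable)
  have "mval \<alpha> \<gamma> p a b TYPE('n) \<le> ereal (action \<alpha> \<gamma> p (scaling a' b' l \<psi>))"
  proof (rule mval_le_action)
    show "scaling a' b' l \<psi> \<in> Hrd \<alpha>"
      using \<psi>(1) l(1) by (rule Hrd_scaling)
    show "potential \<gamma> p (scaling a' b' l \<psi>) > 0"
      using \<psi>(2) l(1) by (simp add: potential_scaling[OF meas])
  qed (fact l(2))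
  also have "\<dots> \<le> ereal (action \<alpha> \<gamma> p \<psi>)"
    using action_scaling_le_action[OF meas l(1,3) params] by simp
  finally show ?thesis .
qed

lemma potential_pos_if_Kfun_nonpos:
  fixes \<phi> :: "real^'n::finite \<Rightarrow> complex"
  assumes "\<phi> \<in> borel_measurable borel" "mass \<phi> + frac_grad_sq \<alpha> \<phi> > 0" "Kfun \<alpha> \<gamma> p a b \<phi> \<le> 0"
    and params: "p > 1" "0 \<le> \<alpha>" "2*\<alpha> \<le> real CARD('n)" "0 \<le> \<gamma>" "0 < a" "0 \<le> b"
  shows "potential \<gamma> p \<phi> > 0"
proof (rule ccontr)
  note e = scaling_exponent_bounds[OF params]
  assume "\<not> potential \<gamma> p \<phi> > 0"
  then have "potential \<gamma> p \<phi> = 0"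
    using potential_nonneg[of \<gamma> p \<phi>] by linarith
  then have "(2*a + real CARD('n) * b) * mass \<phi> + (2*a + (real CARD('n) - 2*\<alpha>) * b) * frac_grad_sq \<alpha> \<phi> \<le> 0"
    using assms(1,3) params by (simp add: Kfun_eq)
  moreover have "(2*a + real CARD('n) * b) * mass \<phi> + (2*a + (real CARD('n) - 2*\<alpha>) * b) * frac_grad_sq \<alpha> \<phi> > 0"
  proof -
    have "mass \<phi> > 0 \<or> frac_grad_sq \<alpha> \<phi> > 0"
      using assms(2) mass_nonneg[of \<phi>] by linarith
    then have "(2*a + real CARD('n) * b) * mass \<phi> > 0 \<or> (2*a + (real CARD('n) - 2*\<alpha>) * b) * frac_grad_sq \<alpha> \<phi> > 0"
      using e(1,2) by auto
    moreover have "(2*a + real CARD('n) * b) * mass \<phi> \<ge> 0" "(2*a + (real CARD('n) - 2*\<alpha>) * b) * frac_grad_sq \<alpha> \<phi> \<ge> 0"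
      using e(1,2) mass_nonneg[of \<phi>] frac_grad_sq_nonneg[of \<alpha> \<phi>] by simp_all
    ultimately show ?thesis
      by linarith
  qed
  ultimately show False
    by linarith
qed

lemma mval_mono:
  assumes params: "p > 1" "0 \<le> \<alpha>" "2*\<alpha> \<le> real CARD('n::finite)" "0 \<le> \<gamma>" "0 < a" "0 \<le> b" "0 < a'" "0 \<le> b'"
  shows "mval \<alpha> \<gamma> p a b TYPE('n) \<le> mval \<alpha> \<gamma> p a' b' TYPE('n)"
  unfolding mval_def[of \<alpha> \<gamma> p a' b']
proof (intro Inf_greatest, clarify)
  fix \<psi> :: "real^'n \<Rightarrow> complex"
  assume \<psi>: "\<psi> \<in> Hrd \<alpha>" "\<not> (AE x in lborel. \<psi> x = 0)" and K': "Kfun \<alpha> \<gamma> p a' b' \<psi> = 0"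
  have meas: "\<psi> \<in> borel_measurable borel"
    using \<psi>(1) by (rule Hrd_measurable)
  have mass: "mass \<psi> > 0"
    using \<psi> by (rule mass_pos)
  then have potential: "potential \<gamma> p \<psi> > 0"
    using meas K' params frac_grad_sq_nonneg[of \<alpha> \<psi>]
    by (intro potential_pos_if_Kfun_nonpos[of _ \<alpha> \<gamma> p a' b']) auto
  have "\<exists>l>0. Kfun \<alpha> \<gamma> p a b (scaling a' b' l \<psi>) = 0"
  proof (cases "Kfun \<alpha> \<gamma> p a b \<psi> \<ge> 0")
    case True
    then obtain l where "l \<ge> 1" "Kfun \<alpha> \<gamma> p a b (scaling a' b' l \<psi>) = 0"
      using exists_Kfun_scaling_zero_ge_one[OF meas potential True params] by blast
    then show ?thesis
      by (intro exI[of _ l]) simp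
  next
    case False
    then have "Kfun \<alpha> \<gamma> p a b \<psi> \<le> 0"
      by simp
    then obtain l where "l \<in> {0<..1}" "Kfun \<alpha> \<gamma> p a b (scaling a' b' l \<psi>) = 0"
      using exists_Kfun_scaling_zero_in_unit_interval[OF meas mass _ params] by blast
    then show ?thesis
      by (intro exI[of _ l]) simp
  qed
  then obtain l where l: "l > 0" "Kfun \<alpha> \<gamma> p a b (scaling a' b' l \<psi>) = 0"
    by blast
  show "mval \<alpha> \<gamma> p a b TYPE('n) \<le> ereal (action \<alpha> \<gamma> p \<psi>)"
    using mval_le_action_if_Kfun_scaling_zero[OF \<psi>(1) potential l _ params(1-4,7,8)] K' by simp
qed

lemma Aset_subset:
  assumes params: "p > 1" "0 \<le> \<alpha>" "2*\<alpha> \<le> real CARD('n::finite)" "0 \<le> \<gamma>" "0 < a" "0 \<le> b" "0 < a'" "0 \<le> b'"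
    and mval_eq: "mval \<alpha> \<gamma> p a b TYPE('n) = mval \<alpha> \<gamma> p a' b' TYPE('n)"
  shows "(Aset \<alpha> \<gamma> p a b :: (real^'n \<Rightarrow> complex) set) \<subseteq> Aset \<alpha> \<gamma> p a' b'"
proof
  fix \<psi> :: "real^'n \<Rightarrow> complex"
  assume "\<psi> \<in> Aset \<alpha> \<gamma> p a b"
  then have \<psi>: "\<psi> \<in> Hrd \<alpha>" "ereal (action \<alpha> \<gamma> p \<psi>) < mval \<alpha> \<gamma> p a b TYPE('n)"
    and K: "Kfun \<alpha> \<gamma> p a b \<psi> > 0"
    by (auto simp: Aset_def)
  have meas: "\<psi> \<in> borel_measurable borel"
    using \<psi>(1) by (rule Hrd_measurable)
  have "Kfun \<alpha> \<gamma> p a' b' \<psi> > 0"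
  proof (rule ccontr)
    assume K': "\<not> Kfun \<alpha> \<gamma> p a' b' \<psi> > 0"
    have "mass \<psi> + frac_grad_sq \<alpha> \<psi> > 0"
    proof (rule ccontr)
      assume "\<not> mass \<psi> + frac_grad_sq \<alpha> \<psi> > 0"
      then have "mass \<psi> = 0" "frac_grad_sq \<alpha> \<psi> = 0"
        using mass_nonneg[of \<psi>] frac_grad_sq_nonneg[of \<alpha> \<psi>] by linarith+
      then have "Kfun \<alpha> \<gamma> p a b \<psi> \<le> 0"
        using meas params scaling_exponent_bounds[OF params(1-6)] potential_nonneg[of \<gamma> p \<psi>]
        by (simp add: Kfun_eq)
      with K show False
        by simp
    qed
    then have potential: "potential \<gamma> p \<psi> > 0"
      using meas K' params by (intro potential_pos_if_Kfun_nonpos[of _ \<alpha> \<gamma> p a' b']) auto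
    obtain l where l: "l \<ge> 1" "Kfun \<alpha> \<gamma> p a b (scaling a' b' l \<psi>) = 0"
      using exists_Kfun_scaling_zero_ge_one[OF meas potential _ params] K by auto
    have "(l - 1) * Kfun \<alpha> \<gamma> p a' b' \<psi> \<le> 0"
      using l(1) K' by (simp add: mult_nonneg_nonpos)
    then have "mval \<alpha> \<gamma> p a b TYPE('n) \<le> ereal (action \<alpha> \<gamma> p \<psi>)"
      using l by (intro mval_le_action_if_Kfun_scaling_zero[OF \<psi>(1) potential _ _ _ params(1-4,7,8)]) auto
    with \<psi>(2) show False
      by simp
  qed
  with \<psi> mval_eq show "\<psi> \<in> Aset \<alpha> \<gamma> p a' b'"
    by (simp add: Aset_def)
qed

theorem lemma8p2:
  fixes \<alpha> \<gamma> p :: real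
  assumes N2: "CARD('n::finite) \<ge> 2"
    and g: "\<gamma> \<ge> 0"
    and al: "real CARD('n) / (2 * real CARD('n) - 1) < \<alpha>" "\<alpha> < 1"
    and p: "p > 1"
    and e1: "2 < p + 1 - 2 * \<gamma> / (real CARD('n) - 2 * \<alpha>)"
    and e2: "p + 1 - 2 * \<gamma> / (real CARD('n) - 2 * \<alpha>)
               < 2 * real CARD('n) / (real CARD('n) - 2 * \<alpha>)"
    and ab: "a > 0" "b \<ge> 0" "a' > 0" "b' \<ge> 0"
  shows "(Aset \<alpha> \<gamma> p a b :: (real^'n \<Rightarrow> complex) set) = Aset \<alpha> \<gamma> p a' b'"
proof -
  have "real CARD('n) / (2 * real CARD('n) - 1) > 0"
    using N2 by (intro divide_pos_pos) auto
  then have \<alpha>: "0 \<le> \<alpha>" "2 * \<alpha> \<le> real CARD('n)"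
    using al N2 by linarith+
  have "mval \<alpha> \<gamma> p a b TYPE('n) = mval \<alpha> \<gamma> p a' b' TYPE('n)"
    using mval_mono[OF p \<alpha> g ab] mval_mono[OF p \<alpha> g ab(3,4,1,2)] by (rule antisym)
  then show ?thesis
    using Aset_subset[OF p \<alpha> g ab] Aset_subset[OF p \<alpha> g ab(3,4,1,2)] by (intro subset_antisym) auto
qed

end
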